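(* Let $\rho_2=(1+2\ln 2)^{-1}\approx0.41906$. Let $\pi$ be drawn uniformly at random among all permutations of $[n]$, independently of $\mathbf v\sim\mathcal F$, and let $p>0$ be such that $\mathbb{E}_{\mathbf v,\pi}\big[\sum_{i\in[n]}y_i(\mathbf v,p,\pi)\big]=\rho_2$. Then \[ \mathbb{E}_{\mathbf v,\pi}[\mathrm{SW}(\mathbf v,p,\pi)]\ \ge\ \rho_2\,\mathbb{E}_{\mathbf v\sim\mathcal F}[\mathrm{SW}^*(\mathbf v)]. \]
   Context: There are $n$ agents, identified with $[n]=\{1,\dots,n\}$, and one perfectly divisible item of size $1$. Each agent $i$ has a valuation function $v_i:[0,1]\to\mathbb{R}_{\ge0}$ that is non-decreasing and concave; $v_i$ is drawn from a publicly known distribution $\mathcal F_i$, independently across agents, and $\mathbf v\sim\mathcal F=\mathcal F_1\times\cdots\times\mathcal F_n$. All expectations are assumed finite. Sequential posted pricing with linear pricing uses a price $p>0$ per unit and an ordering $\pi$: agents act in the order $\pi$; when agent $i$ acts she may buy any fraction of the still-unallocated part of the item, paying $p$ per unit, with utility $v_i(z)-pz$. $y^*_i(v_i,p)\in[0,1]$ denotes a maximizer of $z\mapsto v_i(z)-pz$ over $[0,1]$ (fixed measurable selection). With $B_\pi(i)$ the set of agents acting before $i$ in $\pi$, agent $i$ buys $y_i(\mathbf v,p,\pi)=\min\{y^*_i(v_i,p),\max\{0,1-\sum_{j\in B_\pi(i)}y^*_j(v_j,p)\}\}$. $\mathrm{SW}(\mathbf v,p,\pi)=\sum_i v_i(y_i(\mathbf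 v,p,\pi))$. $x(\mathbf v)$ is a welfare-maximizing allocation ($x_i(\mathbf v)\ge0$, $\sum_i x_i(\mathbf v)=1$, maximizing $\sum_i v_i(x_i)$) and $\mathrm{SW}^*(\mathbf v)=\sum_i v_i(x_i(\mathbf v))$. *)

theory Defs
  imports "HOL-Probability.Probability"
begin

text \<open>A valuation is a
function real => real of which only its values on [0,1] matter.
An ordering is a permutation pi of the agents; agent j acts before agent i
iff pi j < pi i (pi maps an agent to its position).\<close>

definition rho2 :: real where
  "rho2 = 1 / (1 + 2 * ln 2)"

definition valuation :: "(real \<Rightarrow> real) \<Rightarrow> bool" where
  "valuation f \<longleftrightarrow> (\<forall>z\<in>{0..1}. f z \<ge> 0) \<and> mono_on {0..1} f \<and> concave_on {0..1} f"

definition is_opt_demand :: "(real \<Rightarrow> real) \<Rightarrow> real \<Rightarrow> real \<Rightarrow> bool" where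
  "is_opt_demand f q y \<longleftrightarrow> y \<in> {0..1} \<and> (\<forall>z\<in>{0..1}. f z - q * z \<le> f y - q * y)"

definition before :: "nat \<Rightarrow> (nat \<Rightarrow> nat) \<Rightarrow> nat \<Rightarrow> nat set" where
  "before n \<pi> i = {j \<in> {..<n}. \<pi> j < \<pi> i}"

definition y_alloc ::
  "nat \<Rightarrow> (nat \<Rightarrow> (real \<Rightarrow> real) \<Rightarrow> real \<Rightarrow> real) \<Rightarrow> (nat \<Rightarrow> real \<Rightarrow> real)
     \<Rightarrow> real \<Rightarrow> (nat \<Rightarrow> nat) \<Rightarrow> nat \<Rightarrow> real" where
  "y_alloc n ystar v p \<pi> i =
     min (ystar i (v i) p) (max 0 (1 - (\<Sum>j\<in>before n \<pi> i. ystar j (v j) p)))"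

definition SW ::
  "nat \<Rightarrow> (nat \<Rightarrow> (real \<Rightarrow> real) \<Rightarrow> real \<Rightarrow> real) \<Rightarrow> (nat \<Rightarrow> real \<Rightarrow> real)
     \<Rightarrow> real \<Rightarrow> (nat \<Rightarrow> nat) \<Rightarrow> real" where
  "SW n ystar v p \<pi> = (\<Sum>i<n. v i (y_alloc n ystar v p \<pi> i))"

text \<open>Optimal welfare: value of a welfare-maximizing allocation (the supremum,
which is attained).\<close>
definition SW_opt :: "nat \<Rightarrow> (nat \<Rightarrow> real \<Rightarrow> real) \<Rightarrow> real" where
  "SW_opt n v = Sup {(\<Sum>i<n. v i (x i)) | x. (\<forall>i<n. x i \<ge> 0) \<and> (\<Sum>i<n. x i) = 1}"

definition perms :: "nat \<Rightarrow> (nat \<Rightarrow> nat) set" where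
  "perms n = {\<pi>. \<pi> permutes {..<n}}"

definition avg_perm :: "nat \<Rightarrow> ((nat \<Rightarrow> nat) \<Rightarrow> real) \<Rightarrow> real" where
  "avg_perm n g = (\<Sum>\<pi>\<in>perms n. g \<pi>) / real (card (perms n))"

end

theory Submission
  imports Defs "HOL-Analysis.Harmonic_Numbers"
begin

text \<open>Let \<open>U\<^sub>i(q) = max\<^sub>z v\<^sub>i(z) - q z\<close> be the utility of agent \<open>i\<close> at price \<open>q\<close>. Whatever the
  ordering, at least \<open>1 - T\<^sub>i\<close> of the item is left when agent \<open>i\<close> acts, where
  \<open>T\<^sub>i = min 1 (\<Sum>\<^sub>j\<^sub>\<noteq>\<^sub>i y\<^sup>*\<^sub>j)\<close> does not depend on \<open>v\<^sub>i\<close>; by concavity agent \<open>i\<close> then gets at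
  least \<open>p y\<^sub>i + (1 - T\<^sub>i) U\<^sub>i(p)\<close>. On the other hand \<open>SW\<^sup>* \<le> p + \<Sum>\<^sub>i U\<^sub>i(p)\<close>. In expectation
  \<open>T\<^sub>i\<close> and \<open>U\<^sub>i(p)\<close> are independent and \<open>E T\<^sub>i \<le> E \<Sum>\<^sub>i y\<^sub>i = \<rho>\<close>, so
  \<open>E SW - \<rho> E SW\<^sup>* \<ge> (1 - 2\<rho>) \<Sum>\<^sub>i E U\<^sub>i(p) \<ge> 0\<close> for every \<open>\<rho> \<le> 1/2\<close>, in particular for \<open>\<rho>\<^sub>2\<close>.

  The measure-theoretic difficulty is that \<open>v\<^sub>i \<mapsto> U\<^sub>i(p)\<close> must be measurable although only the
  demands and \<open>SW\<^sup>*\<close> are assumed to be. Differences \<open>U\<^sub>i(q) - U\<^sub>i(p)\<close> are limits of Riemann sums of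
  the demand, \<open>v\<^sub>i(x) - U\<^sub>i(p)\<close> is the infimum of \<open>U\<^sub>i(q) - U\<^sub>i(p) + q x\<close> over rational \<open>q > 0\<close>, and
  \<open>SW\<^sup>*\<close> with the other valuations frozen is a countable supremum of \<open>v\<^sub>i(x)\<close> plus terms not
  involving \<open>v\<^sub>i\<close>, so subtracting the two recovers \<open>U\<^sub>i(p)\<close>.\<close>

lemma concave_on_le_secant:
  fixes f :: "real \<Rightarrow> real"
  assumes f: "concave_on I f" and I: "a \<in> I" "b \<in> I" "z \<in> I"
    and ab: "a < b" and z: "z \<le> a \<or> b \<le> z"
  shows "f z \<le> f b + (f b - f a) / (b - a) * (z - b)"
proof -
  have cvx: "convex I" using f by (rule concave_on_imp_convex)
  have conc: "concave_on {c..d} f" if "{c..d} \<subseteq> I" for c d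
    using f that unfolding concave_on_def by (rule convex_on_subset) simp
  consider "z < a" | "z = a \<or> z = b" | "b < z" using z by linarith
  then have "(b - a) * f z \<le> (z - a) * f b - (z - b) * f a"
  proof cases
    case 1
    have "{z..b} \<subseteq> I" using connected_contains_Icc[OF convex_connected[OF cvx]] I by blast
    then have "(f z - f b) / (b - z) * (b - a) + f b \<le> f a"
      using concave_onD_Icc''[OF conc, of z b a] 1 ab by simp
    with 1 ab show ?thesis by (simp add: field_simps)
  next
    case 3
    have "{a..z} \<subseteq> I" using connected_contains_Icc[OF convex_connected[OF cvx]] I by blast
    then have "(f a - f z) / (z - a) * (z - b) + f z \<le> f b"
      using concave_onD_Icc''[OF conc, of a z b] 3 ab by simp
    with 3 ab show ?thesis by (simp add: field_simps)
  qed (auto simp: algebra_simps)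
  with ab show ?thesis by (simp add: field_simps)
qed

lemma valuation_nonneg: "valuation f \<Longrightarrow> 0 \<le> z \<Longrightarrow> z \<le> 1 \<Longrightarrow> 0 \<le> f z"
  by (simp add: valuation_def)

lemma valuation_mono: "valuation f \<Longrightarrow> 0 \<le> x \<Longrightarrow> x \<le> y \<Longrightarrow> y \<le> 1 \<Longrightarrow> f x \<le> f y"
  unfolding valuation_def by (auto intro: mono_onD)

lemma valuation_scale:
  assumes f: "valuation f" and t: "0 \<le> t" "t \<le> 1" and x: "0 \<le> x" "x \<le> 1"
  shows "t * f x \<le> f (t * x)"
proof -
  have "(1 - t) * f 0 + t * f x \<le> f ((1 - t) * 0 + t * x)"
    using concave_onD[of "{0..1}" f t 0 x] f t x unfolding valuation_def by simp
  moreover have "0 \<le> (1 - t) * f 0" using valuation_nonneg[OF f, of 0] t by simp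
  ultimately show ?thesis by simp
qed

lemma valuation_le_secant_plus_gap:
  assumes f: "valuation f" and ax: "0 \<le> a" "a < x" "x \<le> 1" and z: "0 \<le> z" "z \<le> 1"
  shows "f z \<le> f x + (f x - f a) / (x - a) * (z - x) + (f x - f a)"
proof -
  define s where "s = (f x - f a) / (x - a)"
  have "f a \<le> f x" using valuation_mono[OF f] ax by simp
  then have s: "0 \<le> s" "s * (x - a) = f x - f a" using ax by (simp_all add: s_def)
  consider "z \<le> a \<or> x \<le> z" | "a < z" "z < x" by linarith
  then have "f z \<le> f x + s * (z - x) + (f x - f a)"
  proof cases
    case 1
    have "f z \<le> f x + s * (z - x)"
      unfolding s_def using f ax z 1 unfolding valuation_def
      by (intro concave_on_le_secant) auto
    with \<open>f a \<le> f x\<close> show ?thesis by simp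
  next
    case 2
    have "f z \<le> f x" using valuation_mono[OF f] z 2 ax by simp
    moreover have "s * (a - x) \<le> s * (z - x)" using s 2 by (intro mult_left_mono) auto
    ultimately show ?thesis using s by (simp add: algebra_simps)
  qed
  then show ?thesis by (simp add: s_def)
qed

definition utility :: "(real \<Rightarrow> real) \<Rightarrow> (real \<Rightarrow> real) \<Rightarrow> real \<Rightarrow> real" where
  "utility f y q = f (y q) - q * y q"

definition right_riemann_sum :: "(real \<Rightarrow> real) \<Rightarrow> real \<Rightarrow> real \<Rightarrow> nat \<Rightarrow> real" where
  "right_riemann_sum g a b N =
     (\<Sum>k<Suc N. (b - a) / real (Suc N) * g (a + real (Suc k) * ((b - a) / real (Suc N))))"

locale demand =
  fixes f :: "real \<Rightarrow> real" and y :: "real \<Rightarrow> real"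
  assumes valuation: "valuation f"
    and optimal: "\<And>q. 0 < q \<Longrightarrow> is_opt_demand f q (y q)"
begin

lemma demand_nonneg: "0 < q \<Longrightarrow> 0 \<le> y q"
  and demand_le_1: "0 < q \<Longrightarrow> y q \<le> 1"
  using optimal by (auto simp: is_opt_demand_def)

lemma utility_ge: "0 < q \<Longrightarrow> 0 \<le> z \<Longrightarrow> z \<le> 1 \<Longrightarrow> f z - q * z \<le> utility f y q"
  using optimal by (auto simp: is_opt_demand_def utility_def)

lemma utility_nonneg: "0 < q \<Longrightarrow> 0 \<le> utility f y q"
  using utility_ge[of q 0] valuation_nonneg[OF valuation, of 0] by simp

lemma utility_le_value_1: "0 < q \<Longrightarrow> utility f y q \<le> f 1"
  using valuation_mono[OF valuation, of "y q" 1] demand_nonneg[of q] demand_le_1[of q]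
  unfolding utility_def by (smt (verit) mult_nonneg_nonneg)

lemma utility_diff_bounds:
  assumes "0 < a" "a \<le> b"
  shows "(b - a) * y b \<le> utility f y a - utility f y b"
    and "utility f y a - utility f y b \<le> (b - a) * y a"
  using utility_ge[of a "y b"] utility_ge[of b "y a"] demand_nonneg demand_le_1 assms
  by (auto simp: utility_def algebra_simps)

lemma right_riemann_sum_tendsto:
  assumes "0 < a" "a \<le> b"
  shows "right_riemann_sum y a b \<longlonglongrightarrow> utility f y a - utility f y b"
proof (rule real_tendsto_sandwich)
  define D where "D = utility f y a - utility f y b"
  have bounds: "D - (b - a) / real (Suc N) \<le> right_riemann_sum y a b N
                  \<and> right_riemann_sum y a b N \<le> D" for N
  proof -
    define h where "h = (b - a) / real (Suc N)"
    define t where "t k = a + real k * h" for k :: nat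
    have h: "0 \<le> h" unfolding h_def using assms by simp
    have t_pos: "0 < t k" for k unfolding t_def using h assms by (simp add: add_pos_nonneg)
    have t_step: "t (Suc k) = t k + h" for k unfolding t_def by (simp add: algebra_simps)
    have sum_eq: "right_riemann_sum y a b N = (\<Sum>k<Suc N. h * y (t (Suc k)))"
      unfolding right_riemann_sum_def h_def t_def ..
    have telescope: "(\<Sum>k<Suc N. utility f y (t k) - utility f y (t (Suc k))) = D"
      by (subst sum_lessThan_telescope') (simp add: t_def h_def D_def)
    have step: "h * y (t (Suc k)) \<le> utility f y (t k) - utility f y (t (Suc k))"
      "utility f y (t k) - utility f y (t (Suc k)) \<le> h * y (t k)" for k
      using utility_diff_bounds[OF t_pos, of k "t (Suc k)"] t_step[of k] h by auto
    have lower: "(\<Sum>k<Suc N. h * y (t (Suc k))) \<le> D"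
      unfolding telescope[symmetric]
      by (intro sum_mono step)
    have upper: "D \<le> (\<Sum>k<Suc N. h * y (t k))"
      unfolding telescope[symmetric]
      by (intro sum_mono step)
    have "(\<Sum>k<Suc N. h * y (t k)) - (\<Sum>k<Suc N. h * y (t (Suc k))) = h * y (t 0) - h * y (t (Suc N))"
      unfolding sum_subtractf[symmetric] by (rule sum_lessThan_telescope')
    also have "\<dots> \<le> h"
      using demand_le_1[OF t_pos, of 0] demand_nonneg[OF t_pos, of "Suc N"] h
      by (smt (verit) mult_left_le mult_nonneg_nonneg)
    finally show ?thesis using lower upper sum_eq unfolding h_def by linarith
  qed
  show "\<forall>\<^sub>F N in sequentially. D - (b - a) / real (Suc N) \<le> right_riemann_sum y a b N"
    and "\<forall>\<^sub>F N in sequentially. right_riemann_sum y a b N \<le> D"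
    using bounds by auto
  show "(\<lambda>N. D) \<longlonglongrightarrow> D" by simp
  have "(\<lambda>N. (b - a) / real (Suc N)) \<longlonglongrightarrow> 0"
    using LIMSEQ_Suc[OF lim_const_over_n[of "b - a"]] by simp
  then show "(\<lambda>N. D - (b - a) / real (Suc N)) \<longlonglongrightarrow> D"
    using tendsto_diff[of "\<lambda>N. D" D sequentially] by fastforce
qed

lemma utility_plus_price_approx:
  assumes x: "0 < x" "x \<le> 1" and e: "0 < e"
  obtains q where "q \<in> \<rat>" "0 < q" "utility f y q + q * x \<le> f x + e"
proof -
  have fx: "0 \<le> f x" using valuation_nonneg[OF valuation] x by simp
  define t where "t = 1 - e / (2 * (f x + e))"
  have t: "0 \<le> t" "t < 1" "(1 - t) * f x \<le> e / 2"
    using fx e by (auto simp: t_def field_simps)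
  define a where "a = t * x"
  have a: "0 \<le> a" "a < x" using t x by (simp_all add: a_def)
  have gap: "f x - f a \<le> e / 2"
    using valuation_scale[OF valuation, of t x] t x by (simp add: a_def algebra_simps)
  define s where "s = (f x - f a) / (x - a)"
  have "0 \<le> s" using valuation_mono[OF valuation, of a x] a x by (simp add: s_def)
  obtain q where q: "q \<in> \<rat>" "s < q" "q < s + e / 2"
    using Rats_dense_in_real[of s "s + e / 2"] e by auto
  then have q_pos: "0 < q" using \<open>0 \<le> s\<close> by simp
  have secant: "f (y q) \<le> f x + s * (y q - x) + (f x - f a)"
    unfolding s_def using valuation_le_secant_plus_gap[OF valuation a x(2)]
      demand_nonneg[OF q_pos] demand_le_1[OF q_pos] by blast
  have "(q - s) * (x - y q) \<le> (q - s) * 1"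
    using q x demand_nonneg[OF q_pos] by (intro mult_left_mono) auto
  with secant have "utility f y q + q * x \<le> f x + (q - s) + (f x - f a)"
    unfolding utility_def by (simp add: algebra_simps)
  also have "\<dots> \<le> f x + e" using q gap by linarith
  finally show ?thesis using q q_pos that by blast
qed

lemma INF_utility_diff_plus_price:
  assumes x: "0 < x" "x \<le> 1" and p: "0 < p"
  shows "(INF q\<in>{q\<in>\<rat>. 0 < q}. utility f y q - utility f y p + q * x) = f x - utility f y p"
proof (rule antisym)
  have lower: "f x - utility f y p \<le> utility f y q - utility f y p + q * x"
    if "q \<in> {q\<in>\<rat>. 0 < q}" for q
    using utility_ge[of q x] that x by auto
  show "f x - utility f y p \<le> (INF q\<in>{q\<in>\<rat>. 0 < q}. utility f y q - utility f y p + q * x)"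
    by (rule cINF_greatest) (use lower Rats_dense_in_real[of 0 1] in auto)
  show "(INF q\<in>{q\<in>\<rat>. 0 < q}. utility f y q - utility f y p + q * x) \<le> f x - utility f y p"
  proof (rule field_le_epsilon)
    fix e :: real assume "0 < e"
    then obtain q where q: "q \<in> \<rat>" "0 < q" "utility f y q + q * x \<le> f x + e"
      using utility_plus_price_approx[OF x] by blast
    have "(INF q\<in>{q\<in>\<rat>. 0 < q}. utility f y q - utility f y p + q * x)
            \<le> utility f y q - utility f y p + q * x"
      by (rule cINF_lower[OF bdd_belowI2[where m="f x - utility f y p"]]) (use q lower in auto)
    with q show "(INF q\<in>{q\<in>\<rat>. 0 < q}. utility f y q - utility f y p + q * x)
                   \<le> f x - utility f y p + e" by linarith
  qed
qed

lemma value_at_rationed_demand: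
  assumes p: "0 < p" and r: "0 \<le> r" "r \<le> 1"
  shows "p * min (y p) r + r * utility f y p \<le> f (min (y p) r)"
proof (cases "y p \<le> r")
  case True
  have "r * utility f y p \<le> 1 * utility f y p"
    using r utility_nonneg[OF p] by (intro mult_right_mono) auto
  with True show ?thesis by (simp add: utility_def min_def)
next
  case False
  define t where "t = r / y p"
  have y: "0 < y p" "y p \<le> 1" using False r demand_le_1[OF p] by auto
  have t: "0 \<le> t" "t \<le> 1" "r \<le> t" "t * y p = r"
    using False r y by (auto simp: t_def field_simps mult_left_le)
  have "r * utility f y p \<le> t * utility f y p"
    using t utility_nonneg[OF p] by (intro mult_right_mono) auto
  moreover have "t * f (y p) \<le> f r"
    using valuation_scale[OF valuation t(1,2), of "y p"] y t(4) by simp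
  ultimately show ?thesis using False t(4) by (simp add: utility_def min_def algebra_simps)
qed

end

lemma allocation_le_1:
  fixes x :: "nat \<Rightarrow> real"
  shows "\<forall>i<n. 0 \<le> x i \<Longrightarrow> (\<Sum>i<n. x i) = 1 \<Longrightarrow> k < n \<Longrightarrow> x k \<le> 1"
  using member_le_sum[of k "{..<n}" x] by auto

lemma welfare_le_SW_opt:
  assumes v: "\<And>i. i < n \<Longrightarrow> valuation (v i)"
    and x: "\<forall>i<n. 0 \<le> x i" "(\<Sum>i<n. x i) = 1"
  shows "(\<Sum>i<n. v i (x i)) \<le> SW_opt n v"
  unfolding SW_opt_def
proof (rule cSup_upper)
  have "(\<Sum>i<n. v i (z i)) \<le> (\<Sum>i<n. v i 1)" if "\<forall>i<n. 0 \<le> z i" "(\<Sum>i<n. z i) = 1" for z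
    using valuation_mono[OF v] allocation_le_1[OF that] that(1) by (intro sum_mono) auto
  then show "bdd_above {\<Sum>i<n. v i (z i) |z. (\<forall>i<n. 0 \<le> z i) \<and> (\<Sum>i<n. z i) = 1}"
    by (auto intro!: bdd_aboveI)
qed (use x in blast)

lemma SW_opt_le:
  assumes "0 < n"
    and "\<And>x. \<forall>i<n. 0 \<le> x i \<Longrightarrow> (\<Sum>i<n. x i) = 1 \<Longrightarrow> (\<Sum>i<n. v i (x i)) \<le> B"
  shows "SW_opt n v \<le> B"
  unfolding SW_opt_def
proof (rule cSup_least)
  have "(\<Sum>i<n. (if i = 0 then 1 else 0 :: real)) = 1" using assms(1) by (simp add: sum.delta)
  then show "{\<Sum>i<n. v i (x i) |x. (\<forall>i<n. 0 \<le> x i) \<and> (\<Sum>i<n. x i) = 1} \<noteq> {}"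
    by (auto intro!: exI[of _ "\<lambda>i. if i = 0 then 1 else 0"])
qed (use assms(2) in blast)

definition rat_suballocs :: "nat set \<Rightarrow> (nat \<Rightarrow> real) set" where
  "rat_suballocs J = {c \<in> PiE J (\<lambda>_. \<rat>). (\<forall>j\<in>J. 0 \<le> c j) \<and> sum c J < 1}"

lemma countable_rat_suballocs: "finite J \<Longrightarrow> countable (rat_suballocs J)"
  unfolding rat_suballocs_def
  by (rule countable_subset[OF _ countable_PiE[of J "\<lambda>_. \<rat>"]]) (auto simp: countable_rat)

lemma zero_in_rat_suballocs: "(\<lambda>j\<in>J. 0) \<in> rat_suballocs J"
  unfolding rat_suballocs_def by auto

lemma rat_suballoc_below:
  fixes x :: "nat \<Rightarrow> real"
  assumes J: "finite J" and x: "\<forall>j\<in>J. 0 \<le> x j" "sum x J \<le> 1" and d: "0 < d" "d < 1"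
  obtains c where "c \<in> rat_suballocs J" "\<forall>j\<in>J. (1 - d) * x j \<le> c j \<and> c j \<le> x j"
proof -
  have "\<exists>r. r \<in> \<rat> \<and> (1 - d) * x j \<le> r \<and> r \<le> x j \<and> (0 < x j \<longrightarrow> r < x j)" if "j \<in> J" for j
  proof (cases "0 < x j")
    case True
    then have "(1 - d) * x j < x j" using d by simp
    then obtain r where "r \<in> \<rat>" "(1 - d) * x j < r" "r < x j" using Rats_dense_in_real by blast
    then show ?thesis by (intro exI[of _ r]) simp
  next
    case False
    with x that have "x j = 0" by force
    then show ?thesis by (intro exI[of _ 0]) simp
  qed
  then obtain r where r: "\<And>j. j \<in> J \<Longrightarrow> r j \<in> \<rat> \<and> (1 - d) * x j \<le> r j \<and> r j \<le> x j \<and> (0 < x j \<longrightarrow> r j < x j)"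
    by metis
  define c where "c = restrict r J"
  have c: "(1 - d) * x j \<le> c j" "c j \<le> x j" if "j \<in> J" for j
    using r[OF that] that by (auto simp: c_def)
  have c_nonneg: "0 \<le> c j" if "j \<in> J" for j
    using c(1)[OF that] x(1) d that by (smt (verit) mult_nonneg_nonneg)
  have "sum c J < 1"
  proof (cases "\<exists>j\<in>J. 0 < x j")
    case True
    then have "sum c J < sum x J"
      using r c(2) by (intro sum_strict_mono_ex1[OF J]) (auto simp: c_def)
    with x(2) show ?thesis by simp
  next
    case False
    with x(1) c(2) c_nonneg have "sum c J = 0" by (intro sum.neutral) force
    then show ?thesis by simp
  qed
  then have "c \<in> rat_suballocs J" using r c_nonneg by (auto simp: rat_suballocs_def c_def)
  with c that show ?thesis by blast
qed

lemma valuation_ge_scaled: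
  assumes w: "valuation w" and d: "0 \<le> d" "d \<le> 1" and x: "0 \<le> x" "x \<le> 1"
    and r: "(1 - d) * x \<le> r" "r \<le> x"
  shows "(1 - d) * w x \<le> w r"
  using valuation_scale[OF w, of "1 - d" x] valuation_mono[OF w, of "(1 - d) * x" r] d x r
  by simp

lemma rat_suballoc_welfare_approx:
  fixes x :: "nat \<Rightarrow> real"
  assumes J: "finite J" and w: "\<And>j. j \<in> J \<Longrightarrow> valuation (w j)" and f: "valuation f"
    and x: "\<forall>j\<in>J. 0 \<le> x j" "sum x J \<le> 1" and e: "0 < e"
  obtains c where "c \<in> rat_suballocs J"
    "f (1 - sum x J) + (\<Sum>j\<in>J. w j (x j)) \<le> f (1 - sum c J) + (\<Sum>j\<in>J. w j (c j)) + e"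
proof -
  define B where "B = (\<Sum>j\<in>J. w j 1)"
  have B: "0 \<le> B" unfolding B_def using valuation_nonneg[OF w] by (intro sum_nonneg) auto
  define d where "d = min (1/2) (e / (B + 1))"
  have d: "0 < d" "d < 1" using e B by (simp_all add: d_def)
  have "d * B \<le> e / (B + 1) * B" unfolding d_def using B by (intro mult_right_mono) auto
  also have "\<dots> \<le> e" using e B by (simp add: field_simps)
  finally have dB: "d * B \<le> e" .
  have x_le: "x j \<le> 1" if "j \<in> J" for j
    using member_le_sum[of j J x] x J that by auto
  obtain c where c: "c \<in> rat_suballocs J" "\<forall>j\<in>J. (1 - d) * x j \<le> c j \<and> c j \<le> x j"
    using rat_suballoc_below[OF J x d] by blast
  have "0 \<le> sum c J" "sum c J \<le> sum x J"
    using c by (auto simp: rat_suballocs_def intro: sum_nonneg sum_mono)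
  then have "f (1 - sum x J) \<le> f (1 - sum c J)"
    using valuation_mono[OF f] x(2) by simp
  moreover have "(1 - d) * w j (x j) \<le> w j (c j)" if "j \<in> J" for j
    using valuation_ge_scaled[OF w[OF that]] c(2) that d x_le x(1) by auto
  then have "(\<Sum>j\<in>J. (1 - d) * w j (x j)) \<le> (\<Sum>j\<in>J. w j (c j))" by (rule sum_mono)
  moreover have "(\<Sum>j\<in>J. w j (x j)) \<le> B"
    unfolding B_def using valuation_mono[OF w] x(1) x_le by (intro sum_mono) auto
  then have "d * (\<Sum>j\<in>J. w j (x j)) \<le> d * B" using d by (intro mult_left_mono) auto
  ultimately show ?thesis
    using that[OF c(1)] dB by (simp add: sum_distrib_left[symmetric] left_diff_distrib sum_subtractf)
qed

lemma welfare_fun_upd: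
  fixes x :: "nat \<Rightarrow> real"
  assumes "i < n"
  shows "(\<Sum>k<n. (w(i := f)) k (x k)) = f (x i) + (\<Sum>j\<in>{..<n} - {i}. w j (x j))"
proof -
  have "(\<Sum>j\<in>{..<n} - {i}. (w(i := f)) j (x j)) = (\<Sum>j\<in>{..<n} - {i}. w j (x j))"
    by (intro sum.cong) auto
  with assms show ?thesis by (simp add: sum.remove)
qed

lemma rat_suballoc_welfare_le_SW_opt:
  assumes i: "i < n" and w: "\<And>j. j < n \<Longrightarrow> j \<noteq> i \<Longrightarrow> valuation (w j)" and f: "valuation f"
    and c: "c \<in> rat_suballocs ({..<n} - {i})"
  shows "f (1 - sum c ({..<n} - {i})) + (\<Sum>j\<in>{..<n} - {i}. w j (c j)) \<le> SW_opt n (w(i := f))"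
proof -
  define x where "x = c(i := 1 - sum c ({..<n} - {i}))"
  have x_J: "x j = c j" if "j \<in> {..<n} - {i}" for j using that by (simp add: x_def)
  then have "sum x ({..<n} - {i}) = sum c ({..<n} - {i})" by (rule sum.cong[OF refl])
  then have "(\<Sum>k<n. x k) = 1" using i by (simp add: sum.remove x_def)
  moreover have "\<forall>k<n. 0 \<le> x k" using c by (auto simp: x_def rat_suballocs_def)
  ultimately have "(\<Sum>k<n. (w(i := f)) k (x k)) \<le> SW_opt n (w(i := f))"
    using f w by (intro welfare_le_SW_opt) auto
  moreover have "(\<Sum>j\<in>{..<n} - {i}. w j (x j)) = (\<Sum>j\<in>{..<n} - {i}. w j (c j))"
    using x_J by (intro sum.cong) auto
  moreover have "x i = 1 - sum c ({..<n} - {i})" by (simp add: x_def)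
  ultimately show ?thesis unfolding welfare_fun_upd[OF i] by simp
qed

lemma SW_opt_fun_upd_eq_SUP:
  assumes i: "i < n" and w: "\<And>j. j < n \<Longrightarrow> j \<noteq> i \<Longrightarrow> valuation (w j)" and f: "valuation f"
  defines "J \<equiv> {..<n} - {i}"
  shows "SW_opt n (w(i := f)) = (SUP c\<in>rat_suballocs J. f (1 - sum c J) + (\<Sum>j\<in>J. w j (c j)))"
    and "bdd_above ((\<lambda>c. f (1 - sum c J) + (\<Sum>j\<in>J. w j (c j))) ` rat_suballocs J)"
proof -
  define g where "g c = f (1 - sum c J) + (\<Sum>j\<in>J. w j (c j))" for c
  have J: "finite J" "\<And>j. j \<in> J \<Longrightarrow> valuation (w j)" using w by (auto simp: J_def)
  have g_le: "g c \<le> SW_opt n (w(i := f))" if "c \<in> rat_suballocs J" for c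
    using rat_suballoc_welfare_le_SW_opt[OF i w f] that by (simp add: g_def J_def)
  then have bdd: "bdd_above (g ` rat_suballocs J)" by (rule bdd_aboveI2)
  then show "bdd_above ((\<lambda>c. f (1 - sum c J) + (\<Sum>j\<in>J. w j (c j))) ` rat_suballocs J)"
    by (simp add: g_def)
  have "SW_opt n (w(i := f)) \<le> (SUP c\<in>rat_suballocs J. g c)"
  proof (rule SW_opt_le)
    fix x :: "nat \<Rightarrow> real" assume x: "\<forall>k<n. 0 \<le> x k" "(\<Sum>k<n. x k) = 1"
    have xJ: "\<forall>j\<in>J. 0 \<le> x j" "sum x J \<le> 1" "x i = 1 - sum x J"
      using x i by (auto simp: J_def sum.remove)
    show "(\<Sum>k<n. (w(i := f)) k (x k)) \<le> (SUP c\<in>rat_suballocs J. g c)"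
    proof (rule field_le_epsilon)
      fix e :: real assume "0 < e"
      obtain c where c: "c \<in> rat_suballocs J"
        "f (1 - sum x J) + (\<Sum>j\<in>J. w j (x j)) \<le> f (1 - sum c J) + (\<Sum>j\<in>J. w j (c j)) + e"
        by (rule rat_suballoc_welfare_approx[of J w f x e]) (use J f xJ \<open>0 < e\<close> in auto)
      moreover have "g c \<le> (SUP c\<in>rat_suballocs J. g c)" by (rule cSUP_upper[OF c(1) bdd])
      ultimately show "(\<Sum>k<n. (w(i := f)) k (x k)) \<le> (SUP c\<in>rat_suballocs J. g c) + e"
        unfolding welfare_fun_upd[OF i] J_def[symmetric] g_def xJ(3) by linarith
    qed
  qed (use i in simp)
  moreover have "(SUP c\<in>rat_suballocs J. g c) \<le> SW_opt n (w(i := f))"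
    using zero_in_rat_suballocs g_le by (intro cSUP_least) auto
  ultimately show "SW_opt n (w(i := f)) = (SUP c\<in>rat_suballocs J. f (1 - sum c J) + (\<Sum>j\<in>J. w j (c j)))"
    unfolding g_def by simp
qed

lemma sum_y_alloc:
  assumes perm: "\<pi> permutes {..<n}" and nonneg: "\<And>k. k < n \<Longrightarrow> 0 \<le> ystar k (v k) p"
  shows "(\<Sum>k<n. y_alloc n ystar v p \<pi> k) = min 1 (\<Sum>k<n. ystar k (v k) p)"
proof -
  let ?a = "\<lambda>k. ystar k (v k) p"
  have prefix: "(\<Sum>k | k < n \<and> \<pi> k < m. y_alloc n ystar v p \<pi> k) = min 1 (\<Sum>k | k < n \<and> \<pi> k < m. ?a k)"
    if "m \<le> n" for m
    using that
  proof (induction m)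
    case (Suc m)
    have "m \<in> \<pi> ` {..<n}" using permutes_image[OF perm] Suc.prems by simp
    then obtain k0 where k0: "k0 < n" "\<pi> k0 = m" by auto
    define S where "S = {k. k < n \<and> \<pi> k < m}"
    have S: "finite S" "k0 \<notin> S" "before n \<pi> k0 = S"
      using k0 by (auto simp: S_def before_def)
    have insert_S: "{k. k < n \<and> \<pi> k < Suc m} = insert k0 S"
      using k0 permutes_inj[OF perm] by (auto simp: S_def less_Suc_eq inj_eq)
    have IH: "(\<Sum>k\<in>S. y_alloc n ystar v p \<pi> k) = min 1 (sum ?a S)"
      using Suc by (simp add: S_def)
    have "(\<Sum>k | k < n \<and> \<pi> k < Suc m. y_alloc n ystar v p \<pi> k)
            = y_alloc n ystar v p \<pi> k0 + (\<Sum>k\<in>S. y_alloc n ystar v p \<pi> k)"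
      by (simp add: insert_S S(1,2))
    also have "\<dots> = min (?a k0) (max 0 (1 - sum ?a S)) + min 1 (sum ?a S)"
      unfolding IH by (simp add: y_alloc_def S(3))
    also have "\<dots> = min 1 (?a k0 + sum ?a S)" using nonneg[OF k0(1)] by (auto simp: min_def max_def)
    finally show ?case by (simp add: insert_S S)
  qed simp
  have "{k. k < n \<and> \<pi> k < n} = {..<n}" using permutes_in_image[OF perm] by auto
  with prefix[OF order_refl] show ?thesis by simp
qed

lemma supply_left_ge:
  fixes a :: "nat \<Rightarrow> real"
  assumes "\<And>k. k < n \<Longrightarrow> 0 \<le> a k"
  shows "1 - min 1 (\<Sum>j\<in>{..<n} - {i}. a j) \<le> max 0 (1 - (\<Sum>j\<in>before n \<pi> i. a j))"
proof -
  have "(\<Sum>j\<in>before n \<pi> i. a j) \<le> (\<Sum>j\<in>{..<n} - {i}. a j)"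
    using assms by (intro sum_mono2) (auto simp: before_def)
  then show ?thesis by linarith
qed

lemma card_perms_pos: "0 < card (perms n)"
  unfolding perms_def card_gt_0_iff using finite_permutations permutes_id by blast

lemma avg_perm_const: "avg_perm n (\<lambda>_. c) = c"
  using card_perms_pos[of n] by (simp add: avg_perm_def)

lemma avg_perm_mono: "(\<And>\<pi>. \<pi> \<in> perms n \<Longrightarrow> g \<pi> \<le> h \<pi>) \<Longrightarrow> avg_perm n g \<le> avg_perm n h"
  unfolding avg_perm_def using card_perms_pos[of n] by (intro divide_right_mono sum_mono) auto

lemma avg_perm_cong: "(\<And>\<pi>. \<pi> \<in> perms n \<Longrightarrow> g \<pi> = h \<pi>) \<Longrightarrow> avg_perm n g = avg_perm n h"
  unfolding avg_perm_def by simp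

lemma integral_PiM_mult_independent_component:
  fixes g :: "(nat \<Rightarrow> 'a) \<Rightarrow> real" and u :: "'a \<Rightarrow> real"
  assumes prob: "\<And>k. k < n \<Longrightarrow> prob_space (F k)" and i: "i < n"
    and g: "\<And>v z. g (v(i := z)) = g v"
    and int_g: "integrable (PiM {..<n} F) g"
    and int_u: "integrable (PiM {..<n} F) (\<lambda>v. u (v i))"
    and int_gu: "integrable (PiM {..<n} F) (\<lambda>v. g v * u (v i))"
  shows "(\<integral>v. g v * u (v i) \<partial>PiM {..<n} F) = (\<integral>v. g v \<partial>PiM {..<n} F) * (\<integral>v. u (v i) \<partial>PiM {..<n} F)"
proof -
  define F' where "F' k = (if k < n then F k else count_space {undefined})" for k
  interpret F': prob_space "F' k" for k
    unfolding F'_def using prob by (cases "k < n") (auto intro!: prob_spaceI)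
  define J where "J = {..<n} - {i}"
  interpret product_prob_space F' J by unfold_locales
  have J: "finite J" "i \<notin> J" using i by (auto simp: J_def)
  have PiM_eq: "PiM {..<n} F = PiM (insert i J) F'"
    using i by (intro PiM_cong) (auto simp: F'_def J_def)
  have "F' i = F i" using i by (simp add: F'_def)
  note integral_insert = product_integral_insert[OF J, unfolded this, folded PiM_eq]
  define U where "U = (\<integral>z. u z \<partial>F i)"
  have "(\<integral>v. g v * u (v i) \<partial>PiM {..<n} F) = (\<integral>x. g x * U \<partial>PiM J F')"
    using integral_insert[OF int_gu] by (simp add: g U_def)
  moreover have "(\<integral>v. g v \<partial>PiM {..<n} F) = (\<integral>x. g x \<partial>PiM J F')"
    using integral_insert[OF int_g] prob_space.prob_space[OF prob[OF i]] by (simp add: g)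
  moreover have "(\<integral>v. u (v i) \<partial>PiM {..<n} F) = U"
    using integral_insert[OF int_u] prob_space.prob_space[OF prob_space_PiM[of J F']]
    by (simp add: U_def F'.prob_space_axioms)
  ultimately show ?thesis by simp
qed

locale market =
  fixes n :: nat and F :: "nat \<Rightarrow> (real \<Rightarrow> real) measure"
    and ystar :: "nat \<Rightarrow> (real \<Rightarrow> real) \<Rightarrow> real \<Rightarrow> real" and p :: real
  assumes prob: "\<And>i. i < n \<Longrightarrow> prob_space (F i)"
    and val: "\<And>i f. i < n \<Longrightarrow> f \<in> space (F i) \<Longrightarrow> valuation f"
    and ystar_opt: "\<And>i f q. i < n \<Longrightarrow> f \<in> space (F i) \<Longrightarrow> q > 0 \<Longrightarrow> is_opt_demand f q (ystar i f q)"
    and ystar_meas: "\<And>i q. i < n \<Longrightarrow> q > 0 \<Longrightarrow> (\<lambda>f. ystar i f q) \<in> borel_measurable (F i)"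
    and int_opt: "integrable (PiM {..<n} F) (SW_opt n)"
    and p_pos: "p > 0"
begin

lemma demand_agent: "i < n \<Longrightarrow> f \<in> space (F i) \<Longrightarrow> demand f (ystar i f)"
  by unfold_locales (auto intro: val ystar_opt)

lemma measurable_right_riemann_sum:
  assumes "i < n" "0 < a" "a \<le> b"
  shows "(\<lambda>f. right_riemann_sum (ystar i f) a b N) \<in> borel_measurable (F i)"
proof -
  have pos: "0 < a + real (Suc k) * ((b - a) / real (Suc N))" for k
    using assms by (intro add_pos_nonneg) auto
  show ?thesis unfolding right_riemann_sum_def
    by (intro borel_measurable_sum borel_measurable_times borel_measurable_const ystar_meas[OF assms(1) pos])
qed

lemma measurable_utility_diff_le:
  assumes i: "i < n" and ab: "0 < a" "a \<le> b"
  shows "(\<lambda>f. utility f (ystar i f) a - utility f (ystar i f) b) \<in> borel_measurable (F i)"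
proof (rule borel_measurable_LIMSEQ_real)
  fix f assume "f \<in> space (F i)"
  then interpret demand f "ystar i f" by (rule demand_agent[OF i])
  show "(\<lambda>N. right_riemann_sum (ystar i f) a b N)
          \<longlonglongrightarrow> utility f (ystar i f) a - utility f (ystar i f) b"
    by (rule right_riemann_sum_tendsto[OF ab])
qed (rule measurable_right_riemann_sum[OF i ab])

lemma measurable_utility_diff:
  assumes i: "i < n" and a: "0 < a" and b: "0 < b"
  shows "(\<lambda>f. utility f (ystar i f) a - utility f (ystar i f) b) \<in> borel_measurable (F i)"
proof (cases "a \<le> b")
  case False
  then have "(\<lambda>f. - (utility f (ystar i f) b - utility f (ystar i f) a)) \<in> borel_measurable (F i)"
    using measurable_utility_diff_le[OF i b, of a] by (intro borel_measurable_uminus) simp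
  then show ?thesis by simp
qed (rule measurable_utility_diff_le[OF i a])

lemma measurable_value_minus_utility:
  assumes i: "i < n" and x: "0 < x" "x \<le> 1"
  shows "(\<lambda>f. f x - utility f (ystar i f) p) \<in> borel_measurable (F i)"
proof -
  let ?Q = "{q\<in>\<rat>. 0 < q}"
  have "(\<lambda>f. INF q\<in>?Q. utility f (ystar i f) q - utility f (ystar i f) p + q * x)
          \<in> borel_measurable (F i)"
    using measurable_utility_diff[OF i _ p_pos]
    by (intro borel_measurable_cINF_real) (auto intro: countable_subset[OF _ countable_rat])
  moreover have "(INF q\<in>?Q. utility f (ystar i f) q - utility f (ystar i f) p + q * x)
                   = f x - utility f (ystar i f) p" if "f \<in> space (F i)" for f
    using demand.INF_utility_diff_plus_price[OF demand_agent[OF i that] x p_pos] .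
  ultimately show ?thesis by (simp cong: measurable_cong)
qed

lemma measurable_SW_opt_fun_upd:
  assumes i: "i < n" and w: "w \<in> space (PiM ({..<n} - {i}) F)"
  shows "(\<lambda>f. SW_opt n (w(i := f))) \<in> borel_measurable (F i)"
proof -
  have "insert i ({..<n} - {i}) = {..<n}" using i by auto
  with measurable_component_update[OF w]
  have "(\<lambda>f. w(i := f)) \<in> measurable (F i) (PiM {..<n} F)" by fastforce
  moreover have "SW_opt n \<in> borel_measurable (PiM {..<n} F)" using int_opt by simp
  ultimately show ?thesis by (rule measurable_compose)
qed

lemma measurable_utility:
  assumes i: "i < n"
  shows "(\<lambda>f. utility f (ystar i f) p) \<in> borel_measurable (F i)"
proof -
  define J where "J = {..<n} - {i}"
  have "space (PiM J F) \<noteq> {}"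
    using prob_space.not_empty[OF prob] by (auto simp: space_PiM PiE_eq_empty_iff J_def)
  then obtain w where w: "w \<in> space (PiM J F)" by blast
  have w_val: "valuation (w j)" if "j < n" "j \<noteq> i" for j
    using w that val[of j "w j"] by (auto simp: space_PiM J_def)
  define W where "W f c = f (1 - sum c J) + (\<Sum>j\<in>J. w j (c j))" for f c
  have sup: "(\<lambda>f. SUP c\<in>rat_suballocs J. - utility f (ystar i f) p + W f c) \<in> borel_measurable (F i)"
  proof (rule borel_measurable_cSUP)
    fix c assume "c \<in> rat_suballocs J"
    then have "0 < 1 - sum c J" "1 - sum c J \<le> 1"
      by (auto simp: rat_suballocs_def intro: sum_nonneg)
    from measurable_value_minus_utility[OF i this]
    have "(\<lambda>f. (f (1 - sum c J) - utility f (ystar i f) p) + (\<Sum>j\<in>J. w j (c j))) \<in> borel_measurable (F i)"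
      by measurable
    then show "(\<lambda>f. - utility f (ystar i f) p + W f c) \<in> borel_measurable (F i)"
      by (simp add: W_def algebra_simps)
  next
    fix f assume "f \<in> space (F i)"
    then have "bdd_above (W f ` rat_suballocs J)"
      using SW_opt_fun_upd_eq_SUP(2)[OF i w_val val[OF i]] by (simp add: J_def W_def)
    then show "bdd_above ((\<lambda>c. - utility f (ystar i f) p + W f c) ` rat_suballocs J)"
      using bdd_above_image_mono[OF mono_add, of "W f ` rat_suballocs J" "- utility f (ystar i f) p"]
      by (simp add: image_image)
  qed (simp add: countable_rat_suballocs J_def)
  have "SW_opt n (w(i := f)) - (SUP c\<in>rat_suballocs J. - utility f (ystar i f) p + W f c)
          = utility f (ystar i f) p" if "f \<in> space (F i)" for f
    using SW_opt_fun_upd_eq_SUP[OF i w_val val[OF i that]] zero_in_rat_suballocs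
    by (subst Sup_add_eq) (auto simp: J_def W_def)
  then show ?thesis
    using borel_measurable_diff[OF measurable_SW_opt_fun_upd[OF i w[unfolded J_def]] sup]
    by (simp cong: measurable_cong)
qed

abbreviation M :: "(nat \<Rightarrow> real \<Rightarrow> real) measure" where
  "M \<equiv> PiM {..<n} F"

definition units_sold :: "(nat \<Rightarrow> real \<Rightarrow> real) \<Rightarrow> real" where
  "units_sold v = min 1 (\<Sum>k<n. ystar k (v k) p)"

definition others_demand :: "nat \<Rightarrow> (nat \<Rightarrow> real \<Rightarrow> real) \<Rightarrow> real" where
  "others_demand i v = min 1 (\<Sum>j\<in>{..<n} - {i}. ystar j (v j) p)"

definition agent_utility :: "nat \<Rightarrow> (nat \<Rightarrow> real \<Rightarrow> real) \<Rightarrow> real" where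
  "agent_utility i v = utility (v i) (ystar i (v i)) p"

lemma space_M_component: "v \<in> space M \<Longrightarrow> k < n \<Longrightarrow> v k \<in> space (F k)"
  by (auto simp: space_PiM)

lemma demand_at_price_nonneg: "v \<in> space M \<Longrightarrow> k < n \<Longrightarrow> 0 \<le> ystar k (v k) p"
  using demand.demand_nonneg[OF demand_agent p_pos] space_M_component by blast

lemma agent_utility_nonneg: "v \<in> space M \<Longrightarrow> i < n \<Longrightarrow> 0 \<le> agent_utility i v"
  unfolding agent_utility_def using demand.utility_nonneg[OF demand_agent p_pos] space_M_component
  by blast

lemma others_demand_bounds: "v \<in> space M \<Longrightarrow> 0 \<le> others_demand i v \<and> others_demand i v \<le> 1"
  unfolding others_demand_def using demand_at_price_nonneg by (auto intro: sum_nonneg)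

lemma others_demand_le_units_sold:
  assumes "v \<in> space M" shows "others_demand i v \<le> units_sold v"
proof -
  have "(\<Sum>j\<in>{..<n} - {i}. ystar j (v j) p) \<le> (\<Sum>k<n. ystar k (v k) p)"
    using demand_at_price_nonneg[OF assms] by (intro sum_mono2) auto
  then show ?thesis by (auto simp: others_demand_def units_sold_def min_def)
qed

lemma avg_perm_units_sold:
  "v \<in> space M \<Longrightarrow> avg_perm n (\<lambda>\<pi>. \<Sum>i<n. y_alloc n ystar v p \<pi> i) = units_sold v"
  using avg_perm_cong[of n _ "\<lambda>_. units_sold v"] sum_y_alloc demand_at_price_nonneg
  by (simp add: avg_perm_const perms_def units_sold_def)

lemma SW_ge_utilities:
  assumes v: "v \<in> space M" and perm: "\<pi> permutes {..<n}"
  shows "p * units_sold v + (\<Sum>i<n. (1 - others_demand i v) * agent_utility i v) \<le> SW n ystar v p \<pi>"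
proof -
  have "p * y_alloc n ystar v p \<pi> i + (1 - others_demand i v) * agent_utility i v
          \<le> v i (y_alloc n ystar v p \<pi> i)" if i: "i < n" for i
  proof -
    interpret demand "v i" "ystar i (v i)" by (rule demand_agent[OF i space_M_component[OF v i]])
    define r where "r = max 0 (1 - (\<Sum>j\<in>before n \<pi> i. ystar j (v j) p))"
    have "0 \<le> (\<Sum>j\<in>before n \<pi> i. ystar j (v j) p)"
      using demand_at_price_nonneg[OF v] by (intro sum_nonneg) (auto simp: before_def)
    then have r: "0 \<le> r" "r \<le> 1" by (auto simp: r_def)
    have "(1 - others_demand i v) * agent_utility i v \<le> r * agent_utility i v"
      using supply_left_ge[of n "\<lambda>j. ystar j (v j) p"] demand_at_price_nonneg[OF v]
        agent_utility_nonneg[OF v i] by (intro mult_right_mono) (auto simp: others_demand_def r_def)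
    with value_at_rationed_demand[OF p_pos r] show ?thesis
      by (simp add: y_alloc_def agent_utility_def r_def[symmetric])
  qed
  then have "(\<Sum>i<n. p * y_alloc n ystar v p \<pi> i + (1 - others_demand i v) * agent_utility i v)
               \<le> SW n ystar v p \<pi>"
    unfolding SW_def by (intro sum_mono) auto
  moreover have "(\<Sum>i<n. y_alloc n ystar v p \<pi> i) = units_sold v"
    unfolding units_sold_def using demand_at_price_nonneg[OF v] by (intro sum_y_alloc[OF perm])
  ultimately show ?thesis by (simp add: sum.distrib sum_distrib_left[symmetric])
qed

lemma SW_opt_le_price_plus_utilities:
  assumes v: "v \<in> space M" and n: "0 < n"
  shows "SW_opt n v \<le> p + (\<Sum>i<n. agent_utility i v)"
proof (rule SW_opt_le[OF n])
  fix x :: "nat \<Rightarrow> real" assume x: "\<forall>i<n. 0 \<le> x i" "(\<Sum>i<n. x i) = 1"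
  have "v i (x i) \<le> agent_utility i v + p * x i" if i: "i < n" for i
    using demand.utility_ge[OF demand_agent[OF i space_M_component[OF v i]] p_pos]
      allocation_le_1[OF x i] x(1) i by (fastforce simp: agent_utility_def)
  then have "(\<Sum>i<n. v i (x i)) \<le> (\<Sum>i<n. agent_utility i v + p * x i)" by (intro sum_mono) auto
  also have "\<dots> = p + (\<Sum>i<n. agent_utility i v)"
    using x(2) by (simp add: sum.distrib sum_distrib_left[symmetric])
  finally show "(\<Sum>i<n. v i (x i)) \<le> p + (\<Sum>i<n. agent_utility i v)" .
qed

lemma agent_utility_le_SW_opt:
  assumes v: "v \<in> space M" and i: "i < n"
  shows "agent_utility i v \<le> SW_opt n v"
proof -
  interpret demand "v i" "ystar i (v i)" by (rule demand_agent[OF i space_M_component[OF v i]])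
  define x where "x k = (if k = i then 1 else 0 :: real)" for k
  have "(\<Sum>k<n. x k) = 1" "\<forall>k<n. 0 \<le> x k" using i by (simp_all add: x_def sum.delta)
  then have "(\<Sum>k<n. v k (x k)) \<le> SW_opt n v"
    using val space_M_component[OF v] by (intro welfare_le_SW_opt) auto
  moreover have "(\<Sum>k<n. v k (x k)) = v i 1 + (\<Sum>k\<in>{..<n} - {i}. v k 0)"
    using i by (simp add: sum.remove x_def)
  moreover have "0 \<le> (\<Sum>k\<in>{..<n} - {i}. v k 0)"
    using valuation_nonneg[OF val] space_M_component[OF v] by (intro sum_nonneg) auto
  ultimately show ?thesis
    using utility_le_value_1[OF p_pos] by (simp add: agent_utility_def)
qed

lemma measurable_agent_utility:
  assumes "i < n" shows "agent_utility i \<in> borel_measurable M"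
  unfolding agent_utility_def using assms
  by (intro measurable_compose[OF measurable_component_singleton[of i] measurable_utility]) auto

lemma integrable_agent_utility:
  assumes i: "i < n" shows "integrable M (agent_utility i)"
proof (rule Bochner_Integration.integrable_bound[OF int_opt measurable_agent_utility[OF i]])
  have "\<bar>agent_utility i v\<bar> \<le> \<bar>SW_opt n v\<bar>" if "v \<in> space M" for v
    using agent_utility_nonneg[OF that i] agent_utility_le_SW_opt[OF that i] by simp
  then show "AE v in M. norm (agent_utility i v) \<le> norm (SW_opt n v)" by auto
qed

lemma prob_space_M: "prob_space M"
  using prob by (intro prob_space_PiM) auto

lemma integrable_capped_demand:
  assumes "K \<subseteq> {..<n}"
  shows "integrable M (\<lambda>v. min 1 (\<Sum>k\<in>K. ystar k (v k) p))"
proof -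
  interpret prob_space M by (rule prob_space_M)
  have "(\<lambda>v. ystar k (v k) p) \<in> borel_measurable M" if "k \<in> K" for k
    using that assms by (intro measurable_compose[OF measurable_component_singleton[of k] ystar_meas])
      (auto simp: p_pos)
  moreover have "0 \<le> (\<Sum>k\<in>K. ystar k (v k) p)" if "v \<in> space M" for v
    using demand_at_price_nonneg[OF that] assms by (intro sum_nonneg) auto
  ultimately show ?thesis by (intro integrable_const_bound[where B=1]) auto
qed

lemma integrable_others_demand: "integrable M (others_demand i)"
  unfolding others_demand_def[abs_def] by (rule integrable_capped_demand) auto

lemma integrable_others_demand_utility:
  "i < n \<Longrightarrow> integrable M (\<lambda>v. others_demand i v * agent_utility i v)"
proof (rule Bochner_Integration.integrable_bound[OF int_opt])
  assume i: "i < n"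
  show "(\<lambda>v. others_demand i v * agent_utility i v) \<in> borel_measurable M"
    using borel_measurable_integrable[OF integrable_others_demand] measurable_agent_utility[OF i]
    by measurable
  have "\<bar>others_demand i v * agent_utility i v\<bar> \<le> \<bar>SW_opt n v\<bar>" if "v \<in> space M" for v
    using others_demand_bounds[OF that, of i] agent_utility_nonneg[OF that i]
      agent_utility_le_SW_opt[OF that i] mult_left_le_one_le[of "agent_utility i v" "others_demand i v"]
    by simp
  then show "AE v in M. norm (others_demand i v * agent_utility i v) \<le> norm (SW_opt n v)"
    by auto
qed

lemma integral_others_demand_utility:
  assumes i: "i < n"
  shows "(\<integral>v. others_demand i v * agent_utility i v \<partial>M)
           = (\<integral>v. others_demand i v \<partial>M) * (\<integral>v. agent_utility i v \<partial>M)"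
  unfolding agent_utility_def
proof (rule integral_PiM_mult_independent_component[OF prob i])
  show "others_demand i (v(i := z)) = others_demand i v" for v z
    unfolding others_demand_def by (intro arg_cong2[where f=min] sum.cong) auto
qed (use integrable_others_demand integrable_agent_utility[OF i] integrable_others_demand_utility[OF i]
  in \<open>simp_all add: agent_utility_def[abs_def]\<close>)

lemma integrable_price_plus_utilities: "integrable M (\<lambda>v. p + (\<Sum>i<n. agent_utility i v))"
proof -
  interpret prob_space M by (rule prob_space_M)
  show ?thesis using integrable_agent_utility
    by (intro Bochner_Integration.integrable_add Bochner_Integration.integrable_sum) auto
qed

lemma integral_price_plus_utilities:
  "(\<integral>v. p + (\<Sum>i<n. agent_utility i v) \<partial>M) = p + (\<Sum>i<n. \<integral>v. agent_utility i v \<partial>M)"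
proof -
  interpret prob_space M by (rule prob_space_M)
  have "(\<integral>v. (\<Sum>i<n. agent_utility i v) \<partial>M) = (\<Sum>i<n. \<integral>v. agent_utility i v \<partial>M)"
    using integrable_agent_utility by (intro Bochner_Integration.integral_sum) auto
  moreover have "(\<integral>v. p + (\<Sum>i<n. agent_utility i v) \<partial>M) = p + (\<integral>v. (\<Sum>i<n. agent_utility i v) \<partial>M)"
    using integrable_agent_utility
    by (subst Bochner_Integration.integral_add) (auto intro: Bochner_Integration.integrable_sum simp: prob_space)
  ultimately show ?thesis by simp
qed

lemma integrable_units_sold: "integrable M units_sold"
  unfolding units_sold_def[abs_def] by (rule integrable_capped_demand) simp

lemma integrable_utility_share:
  "i < n \<Longrightarrow> integrable M (\<lambda>v. (1 - others_demand i v) * agent_utility i v)"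
  using integrable_agent_utility integrable_others_demand_utility by (simp add: left_diff_distrib)

lemma integrable_welfare_lower_bound:
  "integrable M (\<lambda>v. p * units_sold v + (\<Sum>i<n. (1 - others_demand i v) * agent_utility i v))"
  using integrable_units_sold integrable_utility_share
  by (intro Bochner_Integration.integrable_add Bochner_Integration.integrable_sum
      Bochner_Integration.integrable_mult_right) auto

lemma integral_welfare_lower_bound:
  "(\<integral>v. p * units_sold v + (\<Sum>i<n. (1 - others_demand i v) * agent_utility i v) \<partial>M)
     = p * (\<integral>v. units_sold v \<partial>M)
         + (\<Sum>i<n. (1 - (\<integral>v. others_demand i v \<partial>M)) * (\<integral>v. agent_utility i v \<partial>M))"
proof -
  have "(\<integral>v. (1 - others_demand i v) * agent_utility i v \<partial>M)
          = (1 - (\<integral>v. others_demand i v \<partial>M)) * (\<integral>v. agent_utility i v \<partial>M)" if i: "i < n" for i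
    using integral_others_demand_utility[OF i] integrable_agent_utility[OF i]
      integrable_others_demand_utility[OF i]
    by (simp add: left_diff_distrib)
  moreover have "(\<integral>v. p * units_sold v + (\<Sum>i<n. (1 - others_demand i v) * agent_utility i v) \<partial>M)
      = (\<integral>v. p * units_sold v \<partial>M) + (\<integral>v. (\<Sum>i<n. (1 - others_demand i v) * agent_utility i v) \<partial>M)"
    using integrable_units_sold integrable_utility_share
    by (intro Bochner_Integration.integral_add Bochner_Integration.integrable_sum) auto
  moreover have "(\<integral>v. (\<Sum>i<n. (1 - others_demand i v) * agent_utility i v) \<partial>M)
                   = (\<Sum>i<n. \<integral>v. (1 - others_demand i v) * agent_utility i v \<partial>M)"
    using integrable_utility_share by (intro Bochner_Integration.integral_sum) auto
  ultimately show ?thesis by simp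
qed

lemma avg_SW_ge_utilities:
  "v \<in> space M \<Longrightarrow> p * units_sold v + (\<Sum>i<n. (1 - others_demand i v) * agent_utility i v)
                     \<le> avg_perm n (SW n ystar v p)"
  using avg_perm_mono[of n "\<lambda>_. p * units_sold v + (\<Sum>i<n. (1 - others_demand i v) * agent_utility i v)"]
    SW_ge_utilities by (simp add: avg_perm_const perms_def)

theorem expected_welfare_ge:
  assumes int_SW: "integrable M (\<lambda>v. avg_perm n (SW n ystar v p))"
    and sells: "(\<integral>v. avg_perm n (\<lambda>\<pi>. \<Sum>i<n. y_alloc n ystar v p \<pi> i) \<partial>M) = \<rho>"
    and \<rho>: "0 < \<rho>" "\<rho> \<le> 1 / 2"
  shows "\<rho> * (\<integral>v. SW_opt n v \<partial>M) \<le> (\<integral>v. avg_perm n (SW n ystar v p) \<partial>M)"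
proof -
  interpret prob_space M by (rule prob_space_M)
  define U where "U i = (\<integral>v. agent_utility i v \<partial>M)" for i
  have sold: "(\<integral>v. units_sold v \<partial>M) = \<rho>"
    using sells avg_perm_units_sold by (simp cong: Bochner_Integration.integral_cong)
  have n: "0 < n"
  proof (rule ccontr)
    assume "\<not> 0 < n"
    then have "units_sold v = 0" for v unfolding units_sold_def by simp
    with sold \<rho> show False by simp
  qed
  have share: "\<rho> * U i \<le> (1 - (\<integral>v. others_demand i v \<partial>M)) * U i" if i: "i < n" for i
  proof (rule mult_right_mono)
    show "0 \<le> U i" unfolding U_def using agent_utility_nonneg[OF _ i] by (intro integral_nonneg_AE) auto
    have "(\<integral>v. others_demand i v \<partial>M) \<le> (\<integral>v. units_sold v \<partial>M)"
      using integrable_others_demand integrable_units_sold others_demand_le_units_sold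
      by (intro integral_mono) auto
    with sold \<rho> show "\<rho> \<le> 1 - (\<integral>v. others_demand i v \<partial>M)" by simp
  qed
  have "\<rho> * (\<integral>v. SW_opt n v \<partial>M) \<le> \<rho> * (\<integral>v. p + (\<Sum>i<n. agent_utility i v) \<partial>M)"
    using \<rho> int_opt integrable_price_plus_utilities SW_opt_le_price_plus_utilities[OF _ n]
    by (intro mult_left_mono integral_mono) auto
  also have "\<dots> = p * \<rho> + (\<Sum>i<n. \<rho> * U i)"
    by (simp add: integral_price_plus_utilities U_def sum_distrib_left algebra_simps)
  also have "\<dots> \<le> p * \<rho> + (\<Sum>i<n. (1 - (\<integral>v. others_demand i v \<partial>M)) * U i)"
    using share by (intro add_left_mono sum_mono) auto
  also have "\<dots> = (\<integral>v. p * units_sold v + (\<Sum>i<n. (1 - others_demand i v) * agent_utility i v) \<partial>M)"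
    by (simp add: integral_welfare_lower_bound sold U_def)
  also have "\<dots> \<le> (\<integral>v. avg_perm n (SW n ystar v p) \<partial>M)"
    using integrable_welfare_lower_bound int_SW avg_SW_ge_utilities by (intro integral_mono) auto
  finally show ?thesis .
qed

end

lemma rho2_pos: "0 < rho2"
  unfolding rho2_def by (simp add: add_pos_nonneg)

lemma rho2_le_half: "rho2 \<le> 1 / 2"
  using ln2_ge_two_thirds unfolding rho2_def by (simp add: field_simps)

theorem mainTheorem4:
  fixes n :: nat
    and F :: "nat \<Rightarrow> (real \<Rightarrow> real) measure"
    and ystar :: "nat \<Rightarrow> (real \<Rightarrow> real) \<Rightarrow> real \<Rightarrow> real"
    and p :: real
  assumes prob: "\<And>i. i < n \<Longrightarrow> prob_space (F i)"
    and val: "\<And>i f. i < n \<Longrightarrow> f \<in> space (F i) \<Longrightarrow> valuation f"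
    and ystar_opt: "\<And>i f q. i < n \<Longrightarrow> f \<in> space (F i) \<Longrightarrow> q > 0 \<Longrightarrow> is_opt_demand f q (ystar i f q)"
    and ystar_meas: "\<And>i q. i < n \<Longrightarrow> q > 0 \<Longrightarrow> (\<lambda>f. ystar i f q) \<in> borel_measurable (F i)"
    and int_opt: "integrable (PiM {..<n} F) (SW_opt n)"
    and int_SW: "integrable (PiM {..<n} F) (\<lambda>v. avg_perm n (SW n ystar v p))"
    and int_y: "integrable (PiM {..<n} F) (\<lambda>v. avg_perm n (\<lambda>\<pi>. \<Sum>i<n. y_alloc n ystar v p \<pi> i))"
    and p_pos: "p > 0"
    and p_sell: "(\<integral>v. avg_perm n (\<lambda>\<pi>. \<Sum>i<n. y_alloc n ystar v p \<pi> i) \<partial>PiM {..<n} F) = rho2"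
  shows "(\<integral>v. avg_perm n (SW n ystar v p) \<partial>PiM {..<n} F)
           \<ge> rho2 * (\<integral>v. SW_opt n v \<partial>PiM {..<n} F)"
proof -
  interpret market n F ystar p
    unfolding market_def using prob val ystar_opt ystar_meas int_opt p_pos by blast
  show ?thesis using expected_welfare_ge[OF int_SW p_sell rho2_pos rho2_le_half] .
qed

end
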